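(* Suppose $\mathit{Act}$ is finite and $|\mathit{Act}|\ge2$. Then verdict equivalence $\simeq$ has no finite equational basis over open monitors: there is no finite set $\mathcal{E}$ of equations between monitors that is sound for $\simeq$ (i.e. $\mathcal{E}\vdash m=n$ implies $m\simeq n$) and complete for $\simeq$ (i.e. $m\simeq n$ implies $\mathcal{E}\vdash m=n$, for all monitors $m,n$ possibly containing variables).
   Context: Monitors: terms $m,n ::= v \mid a.m \mid m+n \mid x$ with $a\in\mathit{Act}$, $x$ ranging over a countably infinite set of variables, and verdicts $v::=\mathit{end}\mid\mathit{yes}\mid\mathit{no}$. Semantics: $\xrightarrow{\alpha}$ ($\alpha\in\mathit{Act}\cup\{\tau\}$, $\tau\notin\mathit{Act}$) is the least relation with $a.m\xrightarrow{a}m$; $m\xrightarrow{\alpha}m'$ implies $m+n\xrightarrow{\alpha}m'$ and $n+m\xrightarrow{\alpha}m'$; $v\xrightarrow{\alpha}v$ for verdicts $v$. Weak transitions: $m\xRightarrow{\varepsilon}m'$ iff $m(\xrightarrow{\tau})^*m'$; $m\xRightarrow{a}m'$ iff $m\xRightarrow{\varepsilon}\xrightarrow{a}\xRightarrow{\varepsilon}m'$; $m\xRightarrow{as'}m'$ ($s'\ne\varepsilon$) iff $m\xRightarrow{a}m_1\xRightarrow{s'}m'$. For closed (variable-free) $m$, $L_a(m)=\{s\in\mathit{Act}^*\mid m\xRightarrow{s}\mathit{yes}\}$, $L_r(m)=\{s\in\mathit{Act}^*\mid m\xRightarrow{s}\mathit{no}\}$; $m\simeq n$ iff $L_a(m)=L_a(n)$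 and $L_r(m)=L_r(n)$ for closed terms, and for open terms iff $\sigma(m)\simeq\sigma(n)$ for every substitution $\sigma$ mapping variables to closed monitors. $\mathcal{E}\vdash m=n$ denotes derivability from $\mathcal{E}$ by reflexivity, symmetry, transitivity, substitution (from $t=t'$ infer $\sigma(t)=\sigma(t')$) and congruence for $a.\_$ and $+$. *)

theory Defs
  imports Main
begin

datatype verdict = End | Yes | No

datatype 'a mon = Verd verdict | Pre 'a "'a mon" | Plus "'a mon" "'a mon" | Var nat

text \<open>Labels: Some a for an action a, None for the silent action tau.\<close>

inductive step :: "'a mon \<Rightarrow> 'a option \<Rightarrow> 'a mon \<Rightarrow> bool" where
  act:   "step (Pre a m) (Some a) m"
| sumL:  "step m \<alpha> m' \<Longrightarrow> step (Plus m n) \<alpha> m'"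
| sumR:  "step m \<alpha> m' \<Longrightarrow> step (Plus n m) \<alpha> m'"
| verd:  "step (Verd v) \<alpha> (Verd v)"

definition taus :: "'a mon \<Rightarrow> 'a mon \<Rightarrow> bool" where
  "taus = (\<lambda>m m'. step m None m')\<^sup>*\<^sup>*"

primrec weak :: "'a mon \<Rightarrow> 'a list \<Rightarrow> 'a mon \<Rightarrow> bool" where
  "weak m [] m' = taus m m'"
| "weak m (a # s) m' = (\<exists>m1 m2. taus m m1 \<and> step m1 (Some a) m2 \<and> weak m2 s m')"

primrec vars :: "'a mon \<Rightarrow> nat set" where
  "vars (Verd v) = {}"
| "vars (Pre a m) = vars m"
| "vars (Plus m n) = vars m \<union> vars n"
| "vars (Var x) = {x}"

definition closed :: "'a mon \<Rightarrow> bool" where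
  "closed m \<longleftrightarrow> vars m = {}"

primrec subst :: "(nat \<Rightarrow> 'a mon) \<Rightarrow> 'a mon \<Rightarrow> 'a mon" where
  "subst \<sigma> (Verd v) = Verd v"
| "subst \<sigma> (Pre a m) = Pre a (subst \<sigma> m)"
| "subst \<sigma> (Plus m n) = Plus (subst \<sigma> m) (subst \<sigma> n)"
| "subst \<sigma> (Var x) = \<sigma> x"

definition La :: "'a mon \<Rightarrow> 'a list set" where
  "La m = {s. weak m s (Verd Yes)}"

definition Lr :: "'a mon \<Rightarrow> 'a list set" where
  "Lr m = {s. weak m s (Verd No)}"

definition closed_equiv :: "'a mon \<Rightarrow> 'a mon \<Rightarrow> bool" where
  "closed_equiv m n \<longleftrightarrow> La m = La n \<and> Lr m = Lr n"

text \<open>Verdict equivalence on (possibly open) monitors: closed under all closed substitutions.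
For closed terms this coincides with closed_equiv since substitution leaves them unchanged.\<close>
definition verdict_equiv :: "'a mon \<Rightarrow> 'a mon \<Rightarrow> bool" where
  "verdict_equiv m n \<longleftrightarrow>
     (\<forall>\<sigma>. (\<forall>x. closed (\<sigma> x)) \<longrightarrow> closed_equiv (subst \<sigma> m) (subst \<sigma> n))"

inductive derivable :: "('a mon \<times> 'a mon) set \<Rightarrow> 'a mon \<Rightarrow> 'a mon \<Rightarrow> bool"
  for E :: "('a mon \<times> 'a mon) set" where
  ax:    "(m, n) \<in> E \<Longrightarrow> derivable E m n"
| refl:  "derivable E m m"
| sym:   "derivable E m n \<Longrightarrow> derivable E n m"
| trans: "derivable E m n \<Longrightarrow> derivable E n p \<Longrightarrow> derivable E m p"
| inst:  "derivable E m n \<Longrightarrow> derivable E (subst \<sigma> m) (subst \<sigma> n)"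
| cpre:  "derivable E m n \<Longrightarrow> derivable E (Pre a m) (Pre a n)"
| cplus: "derivable E m n \<Longrightarrow> derivable E m' n' \<Longrightarrow> derivable E (Plus m m') (Plus n n')"

end

theory Submission
  imports Defs
begin

text \<open>Closed monitors denote extension-closed trace sets, since a verdict, once reached, persists.
Call an environment \<open>d\<close>-closed if the trace sets it assigns to variables are closed under
extension only for words shorter than \<open>d\<close>. If \<open>t \<simeq> u\<close> and both have depth below \<open>d\<close>, then
\<open>t\<close> and \<open>u\<close> still denote the same sets in every \<open>d\<close>-closed environment: a word \<open>w f\<close> that
\<open>t\<close> produces through a variable is tested by substituting for that variable a closed monitor
accepting exactly the extensions of \<open>f\<close> (of \<open>f a\<^sup>d b\<close> when \<open>|f| \<ge> d\<close>, a word that no shift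
by fewer than \<open>d\<close> letters maps into itself), and the equivalence carries this probe over to \<open>u\<close>.
This invariant is preserved by derivations from sound equations of depth below \<open>d\<close>.
Yet \<open>x + a.x + C \<simeq> x + C\<close>, where \<open>C\<close> gives both verdicts exactly on the words other than
\<open>a\<^sup>0, \<dots>, a\<^sup>d\<^sup>+\<^sup>1\<close>, fails in the \<open>d\<close>-closed environment sending \<open>x\<close> to \<open>{a\<^sup>d}\<close>. As a
finite set of equations has bounded depth, it cannot be both sound and complete.\<close>

primrec lang :: "verdict \<Rightarrow> (nat \<Rightarrow> verdict \<Rightarrow> 'a list set) \<Rightarrow> 'a mon \<Rightarrow> 'a list set" where
  "lang V \<rho> (Verd v) = (if v = V then UNIV else {})"
| "lang V \<rho> (Pre a m) = (#) a ` lang V \<rho> m"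
| "lang V \<rho> (Plus m n) = lang V \<rho> m \<union> lang V \<rho> n"
| "lang V \<rho> (Var x) = \<rho> x V"

abbreviation closed_lang :: "verdict \<Rightarrow> 'a mon \<Rightarrow> 'a list set" where
  "closed_lang V \<equiv> lang V (\<lambda>_ _. {})"

primrec top_verdicts :: "'a mon \<Rightarrow> verdict set" where
  "top_verdicts (Verd v) = {v}"
| "top_verdicts (Pre a m) = {}"
| "top_verdicts (Plus m n) = top_verdicts m \<union> top_verdicts n"
| "top_verdicts (Var x) = {}"

primrec action_derivs :: "'a mon \<Rightarrow> 'a \<Rightarrow> 'a mon set" where
  "action_derivs (Verd v) c = {}"
| "action_derivs (Pre a m) c = (if a = c then {m} else {})"
| "action_derivs (Plus m n) c = action_derivs m c \<union> action_derivs n c"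
| "action_derivs (Var x) c = {}"

lemma step_iff:
  "step m \<alpha> m' \<longleftrightarrow> (\<exists>v\<in>top_verdicts m. m' = Verd v) \<or> (\<exists>a. \<alpha> = Some a \<and> m' \<in> action_derivs m a)"
proof
  show "step m \<alpha> m' \<Longrightarrow> (\<exists>v\<in>top_verdicts m. m' = Verd v) \<or> (\<exists>a. \<alpha> = Some a \<and> m' \<in> action_derivs m a)"
    by (induction rule: step.induct) auto
  show "(\<exists>v\<in>top_verdicts m. m' = Verd v) \<or> (\<exists>a. \<alpha> = Some a \<and> m' \<in> action_derivs m a) \<Longrightarrow> step m \<alpha> m'"
    by (induction m) (auto intro: step.intros split: if_splits)
qed

lemma taus_iff: "taus m m' \<longleftrightarrow> m' = m \<or> (\<exists>v\<in>top_verdicts m. m' = Verd v)"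
proof
  show "taus m m' \<Longrightarrow> m' = m \<or> (\<exists>v\<in>top_verdicts m. m' = Verd v)"
    unfolding taus_def by (induction rule: rtranclp_induct) (auto simp: step_iff)
  show "m' = m \<or> (\<exists>v\<in>top_verdicts m. m' = Verd v) \<Longrightarrow> taus m m'"
    unfolding taus_def by (auto simp: step_iff)
qed

lemma Nil_in_closed_lang: "[] \<in> closed_lang V m \<longleftrightarrow> V \<in> top_verdicts m"
  by (induction m) auto

lemma Cons_in_closed_lang:
  "c # s \<in> closed_lang V m \<longleftrightarrow> V \<in> top_verdicts m \<or> (\<exists>m'\<in>action_derivs m c. s \<in> closed_lang V m')"
  by (induction m) auto

lemma weak_Verd_iff: "weak m s (Verd V) \<longleftrightarrow> s \<in> closed_lang V m"
proof (induction s arbitrary: m)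
  case Nil
  show ?case by (auto simp: taus_iff Nil_in_closed_lang)
next
  case (Cons c s)
  have "weak (Verd V) s (Verd V)"
    using Cons.IH by simp
  then show ?case
    using Cons.IH by (fastforce simp: taus_iff step_iff Cons_in_closed_lang split: if_splits)
qed

lemma closed_equiv_iff: "closed_equiv m n \<longleftrightarrow> (\<forall>V. V \<noteq> End \<longrightarrow> closed_lang V m = closed_lang V n)"
proof -
  have "(\<forall>V. V \<noteq> End \<longrightarrow> P V) \<longleftrightarrow> P Yes \<and> P No" for P
    by (metis verdict.exhaust verdict.distinct(1,3))
  then show ?thesis
    unfolding closed_equiv_def La_def Lr_def weak_Verd_iff by auto
qed

lemma lang_subst: "lang V \<rho> (subst \<sigma> m) = lang V (\<lambda>x V. lang V \<rho> (\<sigma> x)) m"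
  by (induction m) auto

lemma lang_mono: "(\<And>x V. \<rho> x V \<subseteq> \<rho>' x V) \<Longrightarrow> lang V \<rho> m \<subseteq> lang V \<rho>' m"
  by (induction m) auto

lemma verdict_equiv_iff_lang:
  "verdict_equiv m n \<longleftrightarrow> (\<forall>\<sigma> V. (\<forall>x. closed (\<sigma> x)) \<longrightarrow> V \<noteq> End \<longrightarrow>
     lang V (\<lambda>x V. closed_lang V (\<sigma> x)) m = lang V (\<lambda>x V. closed_lang V (\<sigma> x)) n)"
  unfolding verdict_equiv_def closed_equiv_iff lang_subst by blast

lemma verdict_equiv_sym: "verdict_equiv m n \<Longrightarrow> verdict_equiv n m"
  unfolding verdict_equiv_def closed_equiv_def by simp

lemma lang_cong_env: "(\<And>x. \<rho> x V = \<rho>' x V) \<Longrightarrow> lang V \<rho> m = lang V \<rho>' m"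
  by (induction m) auto

lemma verdict_equiv_closed_lang:
  assumes "verdict_equiv m n" and "V \<noteq> End"
  shows "closed_lang V m = closed_lang V n"
proof -
  have "lang V (\<lambda>x V. closed_lang V (Verd End :: 'a mon)) k = closed_lang V k" for k :: "'a mon"
    using assms(2) by (intro lang_cong_env) simp
  moreover have "lang V (\<lambda>x V. closed_lang V (Verd End :: 'a mon)) m =
      lang V (\<lambda>x V. closed_lang V (Verd End :: 'a mon)) n"
    using assms(1)[unfolded verdict_equiv_iff_lang, rule_format, of "\<lambda>_. Verd End", OF _ assms(2)]
    by (simp add: closed_def)
  ultimately show ?thesis
    by simp
qed

primrec verdict_paths :: "'a mon \<Rightarrow> verdict \<Rightarrow> 'a list set" where
  "verdict_paths (Verd v) V = (if v = V then {[]} else {})"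
| "verdict_paths (Pre a m) V = (#) a ` verdict_paths m V"
| "verdict_paths (Plus m n) V = verdict_paths m V \<union> verdict_paths n V"
| "verdict_paths (Var x) V = {}"

primrec var_paths :: "'a mon \<Rightarrow> nat \<Rightarrow> 'a list set" where
  "var_paths (Verd v) y = {}"
| "var_paths (Pre a m) y = (#) a ` var_paths m y"
| "var_paths (Plus m n) y = var_paths m y \<union> var_paths n y"
| "var_paths (Var x) y = (if x = y then {[]} else {})"

primrec depth :: "'a mon \<Rightarrow> nat" where
  "depth (Verd v) = 0"
| "depth (Pre a m) = Suc (depth m)"
| "depth (Plus m n) = max (depth m) (depth n)"
| "depth (Var x) = 0"

lemma length_verdict_paths: "w \<in> verdict_paths t V \<Longrightarrow> length w \<le> depth t"
  by (induction t arbitrary: w) (auto simp: le_max_iff_disj split: if_splits)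

lemma length_var_paths: "w \<in> var_paths t x \<Longrightarrow> length w \<le> depth t"
  by (induction t arbitrary: w) (auto simp: le_max_iff_disj split: if_splits)

lemma mem_lang_iff_paths:
  "s \<in> lang V \<rho> t \<longleftrightarrow>
     (\<exists>w\<in>verdict_paths t V. \<exists>r. s = w @ r) \<or> (\<exists>x. \<exists>w\<in>var_paths t x. \<exists>f\<in>\<rho> x V. s = w @ f)"
proof (induction t arbitrary: s)
  case (Pre a m)
  then show ?case by (simp add: image_iff) blast
next
  case (Plus m n)
  then show ?case by (simp add: bex_Un) blast
qed auto

definition ext_closed_below :: "nat \<Rightarrow> 'a list set \<Rightarrow> bool" where
  "ext_closed_below d A \<longleftrightarrow> (\<forall>s\<in>A. length s < d \<longrightarrow> (\<forall>r. s @ r \<in> A))"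

definition ext_closed_env :: "nat \<Rightarrow> (nat \<Rightarrow> verdict \<Rightarrow> 'a list set) \<Rightarrow> bool" where
  "ext_closed_env d \<rho> \<longleftrightarrow> (\<forall>x V. ext_closed_below d (\<rho> x V))"

lemma ext_closed_below_lang:
  assumes "ext_closed_env d \<rho>"
  shows "ext_closed_below d (lang V \<rho> m)"
proof (induction m)
  case (Pre a m)
  then show ?case by (fastforce simp: ext_closed_below_def)
next
  case (Var x)
  then show ?case using assms by (simp add: ext_closed_env_def)
qed (auto simp: ext_closed_below_def)

lemma append_in_closed_lang: "s \<in> closed_lang V m \<Longrightarrow> s @ r \<in> closed_lang V m"
  using ext_closed_below_lang[of "Suc (length s)" "\<lambda>_ _. {}" V m]
  by (simp add: ext_closed_env_def ext_closed_below_def)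

lemma ext_closed_env_subst:
  "ext_closed_env d \<rho> \<Longrightarrow> ext_closed_env d (\<lambda>x V. lang V \<rho> (\<sigma> x))"
  by (simp add: ext_closed_env_def ext_closed_below_lang)

lemma no_short_period:
  assumes "p @ z = z @ r" and "z = f @ replicate d a @ [b]"
    and "p \<noteq> []" and "length p \<le> d" and "a \<noteq> b"
  shows False
proof -
  define n where "n = length f + d"
  have "(p @ z) ! n = z ! (n - length p)"
    using assms(4) by (simp add: n_def nth_append)
  also have "\<dots> = (replicate d a @ [b]) ! (d - length p)"
  proof -
    have "n - length p = length f + (d - length p)"
      using assms(4) by (simp add: n_def)
    then show ?thesis
      unfolding assms(2) by (simp only: nth_append_length_plus)
  qed
  also have "\<dots> = a"
  proof -
    have "0 < length p"
      using assms(3) by simp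
    then have "d - length p < d"
      using assms(4) by linarith
    then show ?thesis
      by (simp add: nth_append)
  qed
  finally have "(z @ r) ! n = a"
    using assms(1) by simp
  moreover have "(z @ r) ! n = b"
    using assms(2) by (simp add: n_def nth_append)
  ultimately show False
    using assms(5) by simp
qed

lemma append_marker_cancel:
  assumes "w @ z = w' @ z @ r" and "z = f @ replicate d a @ [b]"
    and "length w \<le> d" and "a \<noteq> b"
  shows "w = w'"
proof -
  have "length w' \<le> length w"
    using arg_cong[OF assms(1), of length] by simp
  then obtain p where p: "w = w' @ p"
    using assms(1) by (metis append_eq_append_conv_if append_eq_conv_conj)
  show ?thesis
  proof (cases "p = []")
    case False
    have "p @ z = z @ r"
      using assms(1) p by simp
    moreover have "length p \<le> d"
      using assms(3) p by simp
    ultimately show ?thesis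
      using no_short_period[OF _ assms(2) False _ assms(4)] by blast
  qed (use p in simp)
qed

lemma lang_foldr_Pre: "lang V \<rho> (foldr Pre g m) = (@) g ` lang V \<rho> m"
  by (induction g) (auto simp: image_image)

lemma closed_foldr_Pre: "closed (foldr Pre g m) \<longleftrightarrow> closed m"
  by (induction g) (simp_all add: closed_def)

lemma verdict_equiv_var_path_probe:
  assumes "verdict_equiv t u" and "w \<in> var_paths t x" and "V \<noteq> End"
  shows "(\<exists>w'\<in>verdict_paths u V. \<exists>r. w @ g = w' @ r) \<or> (\<exists>w'\<in>var_paths u x. \<exists>r. w @ g = w' @ g @ r)"
proof -
  define \<sigma> :: "nat \<Rightarrow> 'a mon" where "\<sigma> = (\<lambda>_. Verd End)(x := foldr Pre g (Verd V))"
  define \<rho> where "\<rho> = (\<lambda>y V'. closed_lang V' (\<sigma> y))"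
  have probe_env: "h \<in> \<rho> y V \<longleftrightarrow> y = x \<and> (\<exists>r. h = g @ r)" for h y
    using assms(3) by (cases "y = x") (auto simp: \<rho>_def \<sigma>_def lang_foldr_Pre)
  have "\<forall>y. closed (\<sigma> y)"
    by (simp add: \<sigma>_def closed_foldr_Pre) (simp add: closed_def)
  then have "lang V \<rho> t = lang V \<rho> u"
    using assms(1)[unfolded verdict_equiv_iff_lang, rule_format, OF _ assms(3)] by (simp add: \<rho>_def)
  moreover have "w @ g \<in> lang V \<rho> t"
  proof -
    have "g \<in> \<rho> x V"
      using probe_env by simp
    then show ?thesis
      using assms(2) unfolding mem_lang_iff_paths by blast
  qed
  ultimately have "w @ g \<in> lang V \<rho> u"
    by simp
  then show ?thesis
    unfolding mem_lang_iff_paths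
  proof (elim disjE bexE exE)
    fix y w' h assume "w' \<in> var_paths u y" "h \<in> \<rho> y V" "w @ g = w' @ h"
    then show ?thesis
      unfolding probe_env by auto
  qed auto
qed

lemma verdict_path_transfer:
  assumes "verdict_equiv t u" and "w \<in> verdict_paths t V" and "V \<noteq> End"
  shows "w @ r \<in> lang V \<rho> u"
proof -
  have "w @ r \<in> closed_lang V t"
    using assms(2) unfolding mem_lang_iff_paths by blast
  then have "w @ r \<in> closed_lang V u"
    using verdict_equiv_closed_lang[OF assms(1,3)] by simp
  then show ?thesis
    using lang_mono[of "\<lambda>_ _. {}" \<rho>] by blast
qed

lemma var_path_transfer:
  fixes a b :: 'a and t u :: "'a mon"
  assumes ve: "verdict_equiv t u" and w: "w \<in> var_paths t x" and f: "f \<in> \<rho> x V"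
    and "depth t < d" and "depth u < d" and \<rho>: "ext_closed_env d \<rho>"
    and V: "V \<noteq> End" and "a \<noteq> b"
  shows "w @ f \<in> lang V \<rho> u"
proof (cases "length f < d")
  case True
  consider (verdict) w' r where "w' \<in> verdict_paths u V" "w @ f = w' @ r"
    | (var) w' r where "w' \<in> var_paths u x" "w @ f = w' @ f @ r"
    using verdict_equiv_var_path_probe[OF ve w V] by blast
  then show ?thesis
  proof cases
    case verdict
    then show ?thesis
      unfolding mem_lang_iff_paths by blast
  next
    case var
    have "f @ r \<in> \<rho> x V"
      using \<rho> f True unfolding ext_closed_env_def ext_closed_below_def by blast
    with var show ?thesis
      unfolding mem_lang_iff_paths by blast
  qed
next
  case False
  define z where "z = f @ replicate d a @ [b]"
  consider (verdict) w' r where "w' \<in> verdict_paths u V" "w @ z = w' @ r"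
    | (var) w' r where "w' \<in> var_paths u x" "w @ z = w' @ z @ r"
    using verdict_equiv_var_path_probe[OF ve w V] by blast
  then show ?thesis
  proof cases
    case verdict
    have "length w' \<le> length (w @ f)"
      using length_verdict_paths[OF verdict(1)] \<open>depth u < d\<close> False by simp
    moreover have "w' @ r = (w @ f) @ replicate d a @ [b]"
      using verdict(2) by (simp add: z_def)
    ultimately have "w' = take (length w') (w @ f)"
      by (metis append_eq_append_conv_if)
    then have "w @ f = w' @ drop (length w') (w @ f)"
      by (metis append_take_drop_id)
    then show ?thesis
      using verdict(1) unfolding mem_lang_iff_paths by blast
  next
    case var
    have "length w \<le> d"
      using length_var_paths[OF w] \<open>depth t < d\<close> by simp
    then have "w = w'"
      using append_marker_cancel[OF var(2) z_def _ \<open>a \<noteq> b\<close>] by blast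
    then show ?thesis
      using var(1) f unfolding mem_lang_iff_paths by blast
  qed
qed

lemma verdict_equiv_lang_subset:
  fixes t u :: "'a mon"
  assumes "verdict_equiv t u" and "depth t < d" and "depth u < d"
    and "ext_closed_env d \<rho>" and "V \<noteq> End" and "\<exists>a b :: 'a. a \<noteq> b"
  shows "lang V \<rho> t \<subseteq> lang V \<rho> u"
proof
  obtain a b :: 'a where "a \<noteq> b"
    using assms(6) by blast
  fix s assume "s \<in> lang V \<rho> t"
  then consider (verdict) w r where "w \<in> verdict_paths t V" "s = w @ r"
    | (var) x w f where "w \<in> var_paths t x" "f \<in> \<rho> x V" "s = w @ f"
    unfolding mem_lang_iff_paths by blast
  then show "s \<in> lang V \<rho> u"
  proof cases
    case verdict
    then show ?thesis
      using verdict_path_transfer assms(1,5) by blast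
  next
    case var
    then show ?thesis
      using var_path_transfer[OF assms(1) var(1,2) assms(2-5) \<open>a \<noteq> b\<close>] by simp
  qed
qed

definition ext_valid :: "nat \<Rightarrow> 'a mon \<Rightarrow> 'a mon \<Rightarrow> bool" where
  "ext_valid d m n \<longleftrightarrow> (\<forall>\<rho> V. ext_closed_env d \<rho> \<longrightarrow> V \<noteq> End \<longrightarrow> lang V \<rho> m = lang V \<rho> n)"

lemma verdict_equiv_ext_valid:
  fixes m n :: "'a mon"
  assumes "verdict_equiv m n" and "depth m < d" and "depth n < d" and "\<exists>a b :: 'a. a \<noteq> b"
  shows "ext_valid d m n"
  unfolding ext_valid_def
  using verdict_equiv_lang_subset[OF assms(1-3) _ _ assms(4)]
    verdict_equiv_lang_subset[OF verdict_equiv_sym[OF assms(1)] assms(3,2) _ _ assms(4)]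
  by blast

lemma ext_valid_subst: "ext_valid d m n \<Longrightarrow> ext_valid d (subst \<sigma> m) (subst \<sigma> n)"
  unfolding ext_valid_def lang_subst by (simp add: ext_closed_env_subst)

lemma derivable_ext_valid:
  fixes E :: "('a mon \<times> 'a mon) set"
  assumes "derivable E m n"
    and "\<And>m n. (m, n) \<in> E \<Longrightarrow> verdict_equiv m n \<and> depth m < d \<and> depth n < d"
    and "\<exists>a b :: 'a. a \<noteq> b"
  shows "ext_valid d m n"
  using assms(1)
proof induction
  case (ax m n)
  then show ?case
    using assms(2,3) verdict_equiv_ext_valid by blast
next
  case (inst m n \<sigma>)
  then show ?case
    using ext_valid_subst by blast
qed (auto simp: ext_valid_def)

lemma finite_equations_depth_bound:
  "finite E \<Longrightarrow> \<exists>d. \<forall>(m, n)\<in>E. depth m < d \<and> depth n < d"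
proof -
  assume "finite E"
  then obtain d where "\<forall>k\<in>(\<lambda>(m, n). max (depth m) (depth n)) ` E. k < d"
    using finite_nat_set_iff_bounded by blast
  then show ?thesis
    by fastforce
qed

primrec all_but_powers :: "'a list \<Rightarrow> 'a \<Rightarrow> nat \<Rightarrow> 'a mon" where
  "all_but_powers cs a 0 = Plus (Verd Yes) (Verd No)"
| "all_but_powers cs a (Suc j) =
     foldr Plus (map (\<lambda>c. Pre c (if c = a then all_but_powers cs a j else Plus (Verd Yes) (Verd No))) cs)
       (Verd End)"

lemma lang_foldr_Plus:
  "V \<noteq> End \<Longrightarrow> lang V \<rho> (foldr Plus ms (Verd End)) = (\<Union>m\<in>set ms. lang V \<rho> m)"
  by (induction ms) auto

lemma lang_all_but_powers:
  assumes "set cs = UNIV" and "V \<noteq> End"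
  shows "lang V \<rho> (all_but_powers cs a j) = {s. \<forall>i<j. s \<noteq> replicate i a}"
proof (induction j)
  case 0
  show ?case
    using assms(2) by (cases V) auto
next
  case (Suc j)
  show ?case
  proof (rule set_eqI)
    fix s :: "'a list"
    show "s \<in> lang V \<rho> (all_but_powers cs a (Suc j)) \<longleftrightarrow> s \<in> {s. \<forall>i<Suc j. s \<noteq> replicate i a}"
    proof (cases s)
      case Nil
      then show ?thesis
        using assms(2) by (force simp: lang_foldr_Plus)
    next
      case (Cons c s')
      have "s \<in> lang V \<rho> (all_but_powers cs a (Suc j)) \<longleftrightarrow> (c = a \<longrightarrow> (\<forall>i<j. s' \<noteq> replicate i a))"
        using Cons Suc.IH assms by (cases V) (auto simp: lang_foldr_Plus)
      also have "\<dots> \<longleftrightarrow> (\<forall>i<Suc j. s \<noteq> replicate i a)"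
        using Cons by (auto simp: less_Suc_eq_0_disj Cons_replicate_eq)
      finally show ?thesis
        by simp
    qed
  qed
qed

lemma verdict_equiv_power_absorb:
  assumes "set cs = UNIV"
  shows "verdict_equiv (Plus (Var x) (Plus (Pre a (Var x)) (all_but_powers cs a j)))
                       (Plus (Var x) (all_but_powers cs a j))"
  unfolding verdict_equiv_iff_lang
proof (intro allI impI)
  fix \<sigma> :: "nat \<Rightarrow> 'a mon" and V :: verdict
  assume "V \<noteq> End"
  define A where "A = closed_lang V (\<sigma> x)"
  have "a # s \<in> A \<union> lang V \<rho> (all_but_powers cs a j)" if "s \<in> A" for s and \<rho>
  proof (cases "\<exists>i<j. a # s = replicate i a")
    case True
    then obtain i where "a # s = replicate i a"
      by blast
    then have "a # s = s @ [a]"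
      by (cases i) (simp_all add: replicate_append_same)
    then have "a # s \<in> A"
      using that append_in_closed_lang unfolding A_def by metis
    then show ?thesis
      by blast
  next
    case False
    then show ?thesis
      using assms \<open>V \<noteq> End\<close> by (simp add: lang_all_but_powers)
  qed
  then show "lang V (\<lambda>x V. closed_lang V (\<sigma> x)) (Plus (Var x) (Plus (Pre a (Var x)) (all_but_powers cs a j))) =
             lang V (\<lambda>x V. closed_lang V (\<sigma> x)) (Plus (Var x) (all_but_powers cs a j))"
    unfolding A_def by auto
qed

lemma not_ext_valid_power_absorb:
  assumes "set cs = UNIV" and "Suc d < j"
  shows "\<not> ext_valid d (Plus (Var x) (Plus (Pre a (Var x)) (all_but_powers cs a j)))
                        (Plus (Var x) (all_but_powers cs a j))"
proof
  define \<rho> :: "nat \<Rightarrow> verdict \<Rightarrow> 'a list set" where "\<rho> = (\<lambda>_ _. {replicate d a})"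
  assume "ext_valid d (Plus (Var x) (Plus (Pre a (Var x)) (all_but_powers cs a j)))
                      (Plus (Var x) (all_but_powers cs a j))"
  moreover have "ext_closed_env d \<rho>"
    by (simp add: \<rho>_def ext_closed_env_def ext_closed_below_def)
  ultimately have "lang Yes \<rho> (Plus (Var x) (Plus (Pre a (Var x)) (all_but_powers cs a j))) =
                   lang Yes \<rho> (Plus (Var x) (all_but_powers cs a j))"
    unfolding ext_valid_def by blast
  moreover have "replicate (Suc d) a \<in> lang Yes \<rho> (Plus (Var x) (Plus (Pre a (Var x)) (all_but_powers cs a j)))"
    by (simp add: \<rho>_def)
  moreover have "replicate (Suc d) a \<notin> lang Yes \<rho> (Plus (Var x) (all_but_powers cs a j))"
    using assms by (auto simp: \<rho>_def lang_all_but_powers simp del: all_but_powers.simps)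
  ultimately show False
    by simp
qed

theorem mainTheorem20:
  assumes "card (UNIV :: 'a::finite set) \<ge> 2"
  shows "\<not> (\<exists>E :: ('a mon \<times> 'a mon) set. finite E
             \<and> (\<forall>m n. derivable E m n \<longrightarrow> verdict_equiv m n)
             \<and> (\<forall>m n. verdict_equiv m n \<longrightarrow> derivable E m n))"
proof
  assume "\<exists>E :: ('a mon \<times> 'a mon) set. finite E
             \<and> (\<forall>m n. derivable E m n \<longrightarrow> verdict_equiv m n)
             \<and> (\<forall>m n. verdict_equiv m n \<longrightarrow> derivable E m n)"
  then obtain E :: "('a mon \<times> 'a mon) set" where "finite E"
    and sound: "\<And>m n. derivable E m n \<Longrightarrow> verdict_equiv m n"
    and complete: "\<And>m n. verdict_equiv m n \<Longrightarrow> derivable E m n"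
    by blast
  have two_actions: "\<exists>a b :: 'a. a \<noteq> b"
    using assms card_le_Suc0_iff_eq[OF finite_UNIV] by (metis not_less_eq_eq numeral_2_eq_2)
  obtain cs :: "'a list" where cs: "set cs = UNIV"
    using finite_list[OF finite_UNIV] by blast
  obtain d where d: "\<forall>(m, n)\<in>E. depth m < d \<and> depth n < d"
    using finite_equations_depth_bound[OF \<open>finite E\<close>] by blast
  have E_bounded: "verdict_equiv m n \<and> depth m < d \<and> depth n < d" if "(m, n) \<in> E" for m n
    using d that sound[OF derivable.ax[OF that]] by auto
  fix a :: 'a
  let ?lhs = "Plus (Var 0) (Plus (Pre a (Var 0)) (all_but_powers cs a (Suc (Suc d))))"
  let ?rhs = "Plus (Var 0) (all_but_powers cs a (Suc (Suc d)))"
  have "ext_valid d ?lhs ?rhs"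
    using derivable_ext_valid[OF complete[OF verdict_equiv_power_absorb[OF cs]] E_bounded two_actions] .
  then show False
    using not_ext_valid_power_absorb[OF cs, of d "Suc (Suc d)"] by simp
qed

end
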